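(* There are infinitely many odd positive integers $N$ for which there are no palindromic numbers $A,B$ with $N=A/B$.
   Context: A positive integer $n$ is palindromic if its binary representation (most significant digit first, no leading zeros) reads the same forwards and backwards. *)

theory Defs
  imports Main
begin

fun bin_digits :: "nat \<Rightarrow> nat list" where
  "bin_digits n = (if n = 0 then [] else n mod 2 # bin_digits (n div 2))"

declare bin_digits.simps[simp del]

definition palindromic :: "nat \<Rightarrow> bool" where
  "palindromic n \<longleftrightarrow> n > 0 \<and> rev (bin_digits n) = bin_digits n"

end

theory Submission
  imports Defs
begin

text \<open>
  Take N = 2^m + 3 with m \<ge> 5 and a palindrome B. In a palindrome the lowest three binary digits
  are the reversal of the highest three. If B \<ge> 4 has top digits t (so 4 \<le> t < 8), then
  A = N B satisfies A \<equiv> 3 B (mod 8), while 3 B is too small to carry more than once into the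
  top digits of 2^m B: the top three digits of A are t or t + 1, or 100 when t = 7 overflows.
  For each of the four values of t, the reversal of A's top digits differs from 3 times the
  reversal of t modulo 8, so A is not a palindrome; B = 1 and B = 3 are checked directly.
\<close>

lemma bin_digits_pos: "n > 0 \<Longrightarrow> bin_digits n = n mod 2 # bin_digits (n div 2)"
  by (simp add: bin_digits.simps)

lemma length_bin_digits:
  "2 ^ k \<le> n \<Longrightarrow> n < 2 ^ Suc k \<Longrightarrow> length (bin_digits n) = Suc k"
proof (induction k arbitrary: n)
  case 0
  then have "n = 1" by simp
  then show ?case by (simp add: bin_digits.simps)
next
  case (Suc k)
  then have "2 ^ k \<le> n div 2" "n div 2 < 2 ^ Suc k"
    by (simp_all add: less_eq_div_iff_mult_less_eq div_less_iff_less_mult mult.commute)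
  with Suc.IH have "length (bin_digits (n div 2)) = Suc k" .
  moreover have "n > 0"
    by (rule less_le_trans[OF _ Suc.prems(1)]) simp
  ultimately show ?case by (simp add: bin_digits_pos)
qed

lemma nth_bin_digits: "i < length (bin_digits n) \<Longrightarrow> bin_digits n ! i = n div 2 ^ i mod 2"
proof (induction n arbitrary: i rule: bin_digits.induct)
  case (1 n)
  then have "n > 0" by (auto simp: bin_digits.simps split: if_splits)
  then show ?case
    using 1 by (cases i) (auto simp: bin_digits_pos div_mult2_eq)
qed

lemma last_bin_digits: "n > 0 \<Longrightarrow> last (bin_digits n) = 1"
proof (induction n rule: bin_digits.induct)
  case (1 n)
  show ?case
  proof (cases "n div 2 = 0")
    case True
    with "1.prems" have "n = 1" by simp
    then show ?thesis by (simp add: bin_digits.simps)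
  next
    case False
    then show ?thesis using 1 by (simp add: bin_digits_pos)
  qed
qed

lemma palindromic_odd: "palindromic n \<Longrightarrow> odd n"
  by (metis palindromic_def bin_digits_pos hd_rev last_bin_digits list.sel(1) odd_iff_mod_2_eq_one)

lemma palindromic_bit_symmetric:
  assumes "palindromic n" and "i < length (bin_digits n)"
  shows "n div 2 ^ i mod 2 = n div 2 ^ (length (bin_digits n) - Suc i) mod 2"
  using assms rev_nth[of i "bin_digits n"] nth_bin_digits[of i n]
    nth_bin_digits[of "length (bin_digits n) - Suc i" n]
  by (simp add: palindromic_def)

definition rev_bits3 :: "nat \<Rightarrow> nat" where
  "rev_bits3 t = 4 * (t mod 2) + 2 * (t div 2 mod 2) + t div 4 mod 2"

lemma mod_8_eq_bits: "(n :: nat) mod 8 = n mod 2 + 2 * (n div 2 mod 2) + 4 * (n div 4 mod 2)"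
  using mod_mult2_eq[of n 2 4] mod_mult2_eq[of "n div 2" 2 2] div_mult2_eq[of n 2 2] by simp

lemma palindromic_mod_8:
  assumes pal: "palindromic A" and lo: "4 \<le> A div 2 ^ k" and hi: "A div 2 ^ k < 8"
  shows "A mod 8 = rev_bits3 (A div 2 ^ k)"
proof -
  define t where "t = A div 2 ^ k"
  have "2 ^ Suc (Suc k) \<le> A" "A < 2 ^ Suc (Suc (Suc k))"
    using lo hi by (simp_all add: less_eq_div_iff_mult_less_eq div_less_iff_less_mult mult.commute)
  then have len: "length (bin_digits A) = k + 3"
    by (subst length_bin_digits[of "k + 2"]) simp_all
  have top: "A div 2 ^ (k + i) = t div 2 ^ i" for i
    by (simp add: t_def power_add div_mult2_eq)
  have "A mod 2 = t div 4 mod 2"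
    using palindromic_bit_symmetric[OF pal, of 0] top[of 2] len by simp
  moreover have "A div 2 mod 2 = t div 2 mod 2"
    using palindromic_bit_symmetric[OF pal, of 1] top[of 1] len by (simp add: numeral_3_eq_3)
  moreover have "A div 4 mod 2 = t mod 2"
    using palindromic_bit_symmetric[OF pal, of 2] top[of 0] len by (simp add: numeral_3_eq_3)
  ultimately show ?thesis
    by (simp add: mod_8_eq_bits[of A] rev_bits3_def t_def)
qed

lemma ex_top_three_bits: "4 \<le> (n :: nat) \<Longrightarrow> \<exists>k. 4 \<le> n div 2 ^ k \<and> n div 2 ^ k < 8"
proof (induction n rule: less_induct)
  case (less n)
  show ?case
  proof (cases "n < 8")
    case True
    then show ?thesis using less.prems by (intro exI[of _ 0]) simp
  next
    case False
    then obtain k where "4 \<le> n div 2 div 2 ^ k" "n div 2 div 2 ^ k < 8"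
      using less.IH[of "n div 2"] by fastforce
    then show ?thesis by (intro exI[of _ "Suc k"]) (simp add: div_mult2_eq)
  qed
qed

lemma pow2_plus_3_mult_mod_8: "3 \<le> m \<Longrightarrow> (2 ^ m + 3) * B mod 8 = 3 * B mod (8 :: nat)"
proof -
  assume "3 \<le> m"
  then have "(2 :: nat) ^ m = 8 * 2 ^ (m - 3)"
    using power_add[of "2 :: nat" 3 "m - 3"] by simp
  then have "(2 ^ m + 3) * B = 3 * B + 2 ^ (m - 3) * B * 8"
    by (simp add: algebra_simps)
  then show ?thesis by (metis mod_mult_self1)
qed

lemma pow2_plus_3_mult_div:
  fixes B :: nat
  assumes m: "5 \<le> m" and t: "B div 2 ^ k < 8"
  defines "s \<equiv> (2 ^ m + 3) * B div 2 ^ (m + k)"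
  shows "s = B div 2 ^ k \<or> s = B div 2 ^ k + 1"
proof -
  define D where "D = (2 :: nat) ^ (m + k)"
  define X where "X = 2 ^ m * (B mod 2 ^ k) + 3 * B"
  have "(2 ^ m + 3) * B = 2 ^ m * (B div 2 ^ k * 2 ^ k + B mod 2 ^ k) + 3 * B"
    unfolding div_mult_mod_eq by (simp add: algebra_simps)
  also have "\<dots> = B div 2 ^ k * D + X"
    unfolding D_def X_def power_add by (simp only: algebra_simps)
  finally have "(2 ^ m + 3) * B = B div 2 ^ k * D + X" .
  then have s_eq: "s = B div 2 ^ k + X div D"
    by (simp add: s_def D_def)
  have "2 ^ m * (B mod 2 ^ k) < D"
    by (simp add: D_def power_add)
  moreover have "3 * B < D"
  proof -
    have "B < 8 * 2 ^ k" using t by (simp add: div_less_iff_less_mult)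
    moreover have "(32 :: nat) * 2 ^ k \<le> D"
      using m power_increasing[of 5 m "2 :: nat"] by (simp add: D_def power_add)
    ultimately show ?thesis by linarith
  qed
  ultimately have "X div D < 2"
    by (simp add: X_def div_less_iff_less_mult)
  then show ?thesis using s_eq by linarith
qed

lemma not_palindromic_pow2_plus_3_mult_top_bits:
  fixes B :: nat
  assumes m: "5 \<le> m" and pal_B: "palindromic B"
    and lo: "4 \<le> B div 2 ^ k" and hi: "B div 2 ^ k < 8"
  shows "\<not> palindromic ((2 ^ m + 3) * B)"
proof
  define A where "A = (2 ^ m + 3) * B"
  define t where "t = B div 2 ^ k"
  define s where "s = A div 2 ^ (m + k)"
  assume "palindromic ((2 ^ m + 3) * B)"
  then have pal_A: "palindromic A" by (simp add: A_def)
  have "A mod 8 = 3 * B mod 8"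
    using pow2_plus_3_mult_mod_8[of m B] m by (simp add: A_def)
  also have "\<dots> = 3 * (B mod 8) mod 8"
    by (simp add: mod_mult_right_eq)
  also have "\<dots> = 3 * rev_bits3 t mod 8"
    using palindromic_mod_8[OF pal_B lo hi] by (simp add: t_def)
  finally have low_bits: "A mod 8 = 3 * rev_bits3 t mod 8" .
  have carry: "s = t \<or> s = t + 1"
    using pow2_plus_3_mult_div[OF m hi] by (simp add: A_def s_def t_def)
  moreover have t_range: "t \<in> {4, 5, 6, 7}"
    using lo hi by (auto simp: t_def)
  ultimately consider "4 \<le> s" "s < 8" | "s = 8" "t = 7"
    by fastforce
  then show False
  proof cases
    case 1
    then have "A mod 8 = rev_bits3 s"
      using palindromic_mod_8[OF pal_A] by (simp add: s_def)
    with low_bits t_range carry 1 show False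
      by (auto simp: rev_bits3_def)
  next
    case 2
    have "A div 2 ^ Suc (m + k) = s div 2"
      unfolding s_def power_Suc2 by (rule div_mult2_eq)
    then have "A mod 8 = rev_bits3 4"
      using palindromic_mod_8[OF pal_A, of "Suc (m + k)"] 2 by simp
    with low_bits 2 show False
      by (simp add: rev_bits3_def)
  qed
qed

lemma not_palindromic_pow2_plus_3_mult:
  fixes B :: nat
  assumes m: "5 \<le> m" and pal_B: "palindromic B"
  shows "\<not> palindromic ((2 ^ m + 3) * B)"
proof (cases "4 \<le> B")
  case True
  then obtain k where "4 \<le> B div 2 ^ k" "B div 2 ^ k < 8"
    using ex_top_three_bits by blast
  then show ?thesis
    using not_palindromic_pow2_plus_3_mult_top_bits[OF m pal_B] by blast
next
  case False
  define A where "A = (2 ^ m + 3) * B"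
  have low_bits: "A mod 8 = 3 * B mod 8"
    using pow2_plus_3_mult_mod_8[of m B] m by (simp add: A_def)
  obtain j where j: "m = j + 2" and j_large: "(8 :: nat) \<le> 2 ^ j"
    using m power_increasing[of 3 "m - 2" "2 :: nat"] by (intro that[of "m - 2"]) auto
  have "B = 1 \<or> B = 3"
    using False palindromic_odd[OF pal_B] by presburger
  then have "\<not> palindromic A"
  proof
    assume "B = 1"
    then have "A = 4 * 2 ^ j + 3"
      using j by (simp add: A_def power_add)
    then have "A div 2 ^ j = 4"
      using j_large by (intro div_nat_eqI) simp_all
    with palindromic_mod_8[of A j] low_bits \<open>B = 1\<close> show ?thesis
      by (auto simp: rev_bits3_def)
  next
    assume "B = 3"
    then have "A = 12 * 2 ^ j + 9"
      using j by (simp add: A_def power_add)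
    then have "A div 2 ^ Suc j = 6"
      using j_large by (intro div_nat_eqI) simp_all
    with palindromic_mod_8[of A "Suc j"] low_bits \<open>B = 3\<close> show ?thesis
      by (auto simp: rev_bits3_def)
  qed
  then show ?thesis by (simp add: A_def)
qed

theorem theorem8:
  shows "infinite {N :: nat. N > 0 \<and> odd N \<and>
           \<not> (\<exists>A B. palindromic A \<and> palindromic B \<and> A = N * B)}"
proof -
  have "inj (\<lambda>n. 2 ^ (n + 5) + 3 :: nat)"
    by (rule injI) simp
  then have "infinite (range (\<lambda>n. 2 ^ (n + 5) + 3 :: nat))"
    using finite_imageD infinite_UNIV_nat by blast
  then show ?thesis
    by (rule infinite_super[rotated]) (use not_palindromic_pow2_plus_3_mult in auto)
qed

end
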